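(* Let $T$ be a tree with maximum degree $\Delta\geq 2$. Then $m_T(\mu_2)\leq \Delta-1$, where $\mu_2=\mu_2(T)$ is the algebraic connectivity of $T$.
   Context: For a graph $G$ on $n$ vertices, the Laplacian matrix is $L(G)=D(G)-A(G)$, with $D(G)$ the diagonal degree matrix and $A(G)$ the adjacency matrix. Its eigenvalues are denoted $0=\mu_1(G)\leq\mu_2(G)\leq\cdots\leq\mu_n(G)$; $\mu_2(G)$ is the algebraic connectivity, and $m_G(\mu)$ denotes the multiplicity of $\mu$ as an eigenvalue of $L(G)$. *)

theory Defs
  imports "Jordan_Normal_Form.Char_Poly"
begin

text \<open>Simple graphs on vertex set {0..<n}: edge relation E, symmetric and irreflexive
  on the vertex set (values of E outside {0..<n} are irrelevant).\<close>

definition simple_graph :: "nat \<Rightarrow> (nat \<Rightarrow> nat \<Rightarrow> bool) \<Rightarrow> bool" where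
  "simple_graph n E \<longleftrightarrow> (\<forall>i<n. \<forall>j<n. E i j \<longleftrightarrow> E j i) \<and> (\<forall>i<n. \<not> E i i)"

definition degree :: "nat \<Rightarrow> (nat \<Rightarrow> nat \<Rightarrow> bool) \<Rightarrow> nat \<Rightarrow> nat" where
  "degree n E i = card {j. j < n \<and> E i j}"

definition max_degree :: "nat \<Rightarrow> (nat \<Rightarrow> nat \<Rightarrow> bool) \<Rightarrow> nat" where
  "max_degree n E = Max (degree n E ` {0..<n})"

definition num_edges :: "nat \<Rightarrow> (nat \<Rightarrow> nat \<Rightarrow> bool) \<Rightarrow> nat" where
  "num_edges n E = card {(i, j). i < j \<and> j < n \<and> E i j}"

definition connected_graph :: "nat \<Rightarrow> (nat \<Rightarrow> nat \<Rightarrow> bool) \<Rightarrow> bool" where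
  "connected_graph n E \<longleftrightarrow>
     (\<forall>i<n. \<forall>j<n. (\<lambda>x y. x < n \<and> y < n \<and> E x y)\<^sup>*\<^sup>* i j)"

definition is_tree :: "nat \<Rightarrow> (nat \<Rightarrow> nat \<Rightarrow> bool) \<Rightarrow> bool" where
  "is_tree n E \<longleftrightarrow> n \<ge> 1 \<and> simple_graph n E \<and> connected_graph n E \<and> num_edges n E = n - 1"

definition laplacian :: "nat \<Rightarrow> (nat \<Rightarrow> nat \<Rightarrow> bool) \<Rightarrow> real mat" where
  "laplacian n E = mat n n (\<lambda>(i, j). (if i = j then real (degree n E i) else 0)
                                   - (if E i j then 1 else 0))"

definition eig_mult :: "real mat \<Rightarrow> real \<Rightarrow> nat" where
  "eig_mult A mu = order mu (char_poly A)"

text \<open>The k-th smallest eigenvalue (k \<ge> 1), counted with multiplicity: the least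
  eigenvalue mu such that at least k eigenvalues (with multiplicity) are \<le> mu.\<close>
definition kth_eigenvalue :: "real mat \<Rightarrow> nat \<Rightarrow> real" where
  "kth_eigenvalue A k = Min {mu. eigenvalue A mu \<and>
      (\<Sum>x\<in>{x. eigenvalue A x \<and> x \<le> mu}. eig_mult A x) \<ge> k}"

end

theory Submission
  imports Defs "Jordan_Normal_Form.Jordan_Normal_Form_Uniqueness"
    "Jordan_Normal_Form.Jordan_Normal_Form_Existence"
begin

(*
  The Laplacian L of T is symmetric, so the multiplicity of mu2 is the dimension of its
  eigenspace, and it suffices to find at most Delta - 1 vertices on which a mu2-eigenvector
  cannot vanish without vanishing everywhere.  The tool is the easy half of the min-max
  principle: a zero-sum vector whose Rayleigh quotient is at most mu2 is a mu2-eigenvector.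
  Applied to combinations of the absolute values of eigenvectors restricted to different
  branches of T at a vertex v, it shows: if some eigenvector vanishes at v but not at a
  neighbour of v, then every eigenvector vanishes at v and is determined by its values on
  all neighbours of v but one.  If there is no such vertex, an eigenvector is determined by
  its value at a single vertex.
*)

section \<open>Real symmetric matrices\<close>

lemma index_mult_mat_vec_sum:
  assumes "A \<in> carrier_mat n n" "v \<in> carrier_vec n" "k < n"
  shows "(A *\<^sub>v v) $ k = (\<Sum>j<n. A $$ (k, j) * v $ j)"
  using assms by (auto simp: scalar_prod_def lessThan_atLeast0 intro!: sum.cong)

lemma index_mult_mat_sum:
  assumes "M \<in> carrier_mat n m" "N \<in> carrier_mat m p" "k < n" "i < p"
  shows "(M * N) $$ (k, i) = (\<Sum>j<m. M $$ (k, j) * N $$ (j, i))"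
  using assms by (auto simp: scalar_prod_def lessThan_atLeast0 intro!: sum.cong)

lemma hermitian_eigenvalue_real:
  fixes A :: "complex mat"
  assumes A: "A \<in> carrier_mat n n"
    and hermitian: "\<And>i j. i < n \<Longrightarrow> j < n \<Longrightarrow> A $$ (i, j) = cnj (A $$ (j, i))"
    and ev: "eigenvalue A a"
  shows "cnj a = a"
proof -
  from ev obtain v where v: "v \<in> carrier_vec n" "v \<noteq> 0\<^sub>v n" "A *\<^sub>v v = a \<cdot>\<^sub>v v"
    unfolding eigenvalue_def eigenvector_def using A by auto
  have eq: "(\<Sum>j<n. A $$ (k, j) * v $ j) = a * v $ k" if "k < n" for k
  proof -
    have "(A *\<^sub>v v) $ k = (a \<cdot>\<^sub>v v) $ k" using v by simp
    thus ?thesis using index_mult_mat_vec_sum[OF A v(1) that] that v(1) by simp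
  qed
  define S where "S = (\<Sum>k<n. \<Sum>j<n. cnj (v $ k) * A $$ (k, j) * v $ j)"
  define N where "N = (\<Sum>k<n. cnj (v $ k) * v $ k)"
  have "S = (\<Sum>k<n. cnj (v $ k) * (\<Sum>j<n. A $$ (k, j) * v $ j))"
    unfolding S_def by (simp add: sum_distrib_left mult.assoc)
  also have "\<dots> = a * N"
    using eq unfolding N_def by (simp add: sum_distrib_left algebra_simps)
  finally have S_eq: "S = a * N" .
  have "cnj S = (\<Sum>k<n. \<Sum>j<n. v $ k * A $$ (j, k) * cnj (v $ j))"
  proof -
    have "cnj (A $$ (k, j)) = A $$ (j, k)" if "k < n" "j < n" for k j
      using hermitian[OF that(2,1)] by simp
    thus ?thesis unfolding S_def by simp
  qed
  also have "\<dots> = S"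
    unfolding S_def by (subst sum.swap) (intro sum.cong refl, simp add: algebra_simps)
  finally have S_real: "cnj S = S" .
  have N_eq: "N = of_real (\<Sum>k<n. (cmod (v $ k))\<^sup>2)"
    unfolding N_def of_real_sum by (intro sum.cong refl) (metis complex_norm_square mult.commute)
  have "N \<noteq> 0"
  proof
    assume "N = 0"
    hence "(\<Sum>k<n. (cmod (v $ k))\<^sup>2) = 0" unfolding N_eq by (metis of_real_eq_0_iff)
    hence "\<forall>k\<in>{..<n}. (cmod (v $ k))\<^sup>2 = 0" by (subst (asm) sum_nonneg_eq_0_iff) auto
    hence "v = 0\<^sub>v n" using v(1) by (intro eq_vecI) auto
    with v(2) show False by simp
  qed
  moreover have "cnj a * N = a * N"
  proof -
    have "cnj N = N" unfolding N_eq by simp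
    thus ?thesis using S_eq S_real by (metis complex_cnj_mult)
  qed
  ultimately show ?thesis by simp
qed

lemma mat_columns_span:
  fixes P Q :: "'a :: comm_ring_1 mat"
  assumes P: "P \<in> carrier_mat n n" and Q: "Q \<in> carrier_mat n n" and PQ: "P * Q = 1\<^sub>m n"
  shows "\<exists>c. \<forall>k<n. y k = (\<Sum>i<n. c i * P $$ (k, i))"
proof -
  define c where "c i = (\<Sum>l<n. Q $$ (i, l) * y l)" for i
  have "y k = (\<Sum>i<n. c i * P $$ (k, i))" if k: "k < n" for k
  proof -
    have "(\<Sum>i<n. c i * P $$ (k, i)) = (\<Sum>i<n. \<Sum>l<n. P $$ (k, i) * Q $$ (i, l) * y l)"
      unfolding c_def sum_distrib_right sum_distrib_left by (intro sum.cong refl) (simp add: mult_ac)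
    also have "\<dots> = (\<Sum>l<n. \<Sum>i<n. P $$ (k, i) * Q $$ (i, l) * y l)"
      by (rule sum.swap)
    also have "\<dots> = (\<Sum>l<n. (P * Q) $$ (k, l) * y l)"
      by (intro sum.cong refl) (simp add: index_mult_mat_sum[OF P Q k] sum_distrib_right)
    also have "\<dots> = (\<Sum>l<n. if k = l then y l else 0)"
      using k by (intro sum.cong refl) (auto simp: PQ)
    also have "\<dots> = y k" using k by simp
    finally show ?thesis by simp
  qed
  thus ?thesis by blast
qed

lemma mat_columns_independent:
  fixes P Q :: "'a :: comm_ring_1 mat"
  assumes P: "P \<in> carrier_mat n n" and Q: "Q \<in> carrier_mat n n" and QP: "Q * P = 1\<^sub>m n"
    and zero: "\<And>k. k < n \<Longrightarrow> (\<Sum>i<n. c i * P $$ (k, i)) = 0" and i: "i < n"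
  shows "c i = 0"
proof -
  have "c i = (\<Sum>k<n. if i = k then c k else 0)" using i by simp
  also have "\<dots> = (\<Sum>k<n. (Q * P) $$ (i, k) * c k)"
    using i by (intro sum.cong refl) (auto simp: QP)
  also have "\<dots> = (\<Sum>l<n. Q $$ (i, l) * (\<Sum>k<n. c k * P $$ (l, k)))"
    by (simp add: index_mult_mat_sum[OF Q P i] sum_distrib_left sum_distrib_right algebra_simps)
      (rule sum.swap)
  also have "\<dots> = 0" using zero by simp
  finally show ?thesis .
qed

lemma sum_list_min_1_eq_min_2:
  assumes "sum_list (map (min 1) xs) = sum_list (map (min (2::nat)) xs)" and "0 \<notin> set xs"
    and "x \<in> set xs"
  shows "x = 1"
  using assms
proof (induction xs)
  case (Cons y xs)
  have "sum_list (map (min 1) xs) \<le> sum_list (map (min (2::nat)) xs)"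
    by (rule sum_list_mono) simp
  moreover have "min 1 y \<le> min 2 y" by simp
  ultimately have "min 1 y = min 2 y"
    and "sum_list (map (min 1) xs) = sum_list (map (min (2::nat)) xs)"
    using Cons.prems(1) by auto
  thus ?case using Cons by auto
qed simp

lemma jordan_matrix_size_one:
  assumes "i < length es" "j < length es"
  shows "jordan_matrix (map (\<lambda>a. (1, a)) es) $$ (i, j) = (if i = j then es ! i else 0)"
  using assms
proof (induction es arbitrary: i j)
  case (Cons a es)
  let ?J = "jordan_matrix (map (\<lambda>a. (1, a)) es)"
  have len: "sum_list (map fst (map (\<lambda>a. (1::nat, a)) es)) = length es"
    by (induct es) auto
  have J: "jordan_matrix (map (\<lambda>a. (1, a)) (a # es)) =
      four_block_mat (jordan_block 1 a) (0\<^sub>m 1 (length es)) (0\<^sub>m (length es) 1) ?J"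
    using jordan_matrix_Cons[of 1 a "map (\<lambda>a. (1, a)) es"] len by simp
  show ?case
    using Cons.prems Cons.IH[of "i - 1" "j - 1"] len unfolding J by (cases i; cases j) auto
qed simp

(* Vectors are modelled as functions nat \<Rightarrow> real; only their values below n matter. *)
locale sym_mat =
  fixes n :: nat and A :: "real mat"
  assumes carrier: "A \<in> carrier_mat n n"
    and symmetric: "\<And>i j. i < n \<Longrightarrow> j < n \<Longrightarrow> A $$ (i, j) = A $$ (j, i)"
begin

definition mat_app :: "(nat \<Rightarrow> real) \<Rightarrow> nat \<Rightarrow> real" where
  "mat_app x k = (\<Sum>j<n. A $$ (k, j) * x j)"

definition dot :: "(nat \<Rightarrow> real) \<Rightarrow> (nat \<Rightarrow> real) \<Rightarrow> real" where
  "dot x y = (\<Sum>k<n. x k * y k)"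

definition in_eigenspace :: "real \<Rightarrow> (nat \<Rightarrow> real) \<Rightarrow> bool" where
  "in_eigenspace \<mu> x \<longleftrightarrow> (\<forall>k<n. mat_app x k = \<mu> * x k)"

lemma char_poly_splits: "\<exists>as. char_poly A = (\<Prod>a\<leftarrow>as. [:- a, 1:])"
proof -
  interpret of_real: map_poly_inj_idom_hom "of_real :: real \<Rightarrow> complex" ..
  define Ac where "Ac = map_mat complex_of_real A"
  have Ac: "Ac \<in> carrier_mat n n" using carrier unfolding Ac_def by auto
  have hermitian: "\<And>i j. i < n \<Longrightarrow> j < n \<Longrightarrow> Ac $$ (i, j) = cnj (Ac $$ (j, i))"
    unfolding Ac_def using carrier symmetric by auto
  obtain cs where cs: "char_poly Ac = (\<Prod>a\<leftarrow>cs. [:- a, 1:])"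
    using char_poly_factorized[OF Ac] by auto
  have "cnj c = c" if "c \<in> set cs" for c
  proof -
    have "poly (char_poly Ac) c = 0" unfolding cs using that
      by (simp add: poly_prod_list_zero_iff)
    hence "eigenvalue Ac c" using eigenvalue_root_char_poly[OF Ac] by simp
    thus ?thesis using hermitian_eigenvalue_real[OF Ac] hermitian by blast
  qed
  hence real_cs: "map complex_of_real (map Re cs) = cs"
    by (induct cs) (auto simp: complex_eq_iff)
  have "map_poly complex_of_real (char_poly A) = char_poly Ac"
    unfolding Ac_def by (rule of_real_hom.char_poly_hom[OF carrier, symmetric])
  also have "\<dots> = (\<Prod>a\<leftarrow>map complex_of_real (map Re cs). [:- a, 1:])"
    unfolding real_cs by (rule cs)
  also have "\<dots> = map_poly of_real (\<Prod>a\<leftarrow>map Re cs. [:- a, 1:])"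
    unfolding of_real.hom_prod_list by (simp add: o_def)
  finally have "map_poly complex_of_real (char_poly A) = map_poly of_real (\<Prod>a\<leftarrow>map Re cs. [:- a, 1:])" .
  thus ?thesis by (blast dest: of_real.injectivity)
qed

lemma mat_kernel_square: "mat_kernel (A * A) = mat_kernel A"
proof (rule equalityI)
  have AA: "A * A \<in> carrier_mat n n" using carrier by auto
  show "mat_kernel (A * A) \<subseteq> mat_kernel A"
  proof
    fix v assume "v \<in> mat_kernel (A * A)"
    hence v: "v \<in> carrier_vec n" "(A * A) *\<^sub>v v = 0\<^sub>v n" using mat_kernelD[OF AA] by auto
    define w where "w = A *\<^sub>v v"
    have w: "w \<in> carrier_vec n" unfolding w_def using carrier v by simp
    have Aw: "A *\<^sub>v w = 0\<^sub>v n" unfolding w_def using v carrier by (simp add: assoc_mult_mat_vec)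
    have "(\<Sum>k<n. w $ k * w $ k) = (\<Sum>k<n. \<Sum>j<n. w $ k * A $$ (k, j) * v $ j)"
      unfolding w_def using index_mult_mat_vec_sum[OF carrier v(1)]
      by (simp add: sum_distrib_left mult.assoc)
    also have "\<dots> = (\<Sum>j<n. v $ j * (\<Sum>k<n. A $$ (j, k) * w $ k))"
      by (subst sum.swap) (auto simp: sum_distrib_left symmetric mult_ac intro!: sum.cong)
    also have "\<dots> = 0"
      using index_mult_mat_vec_sum[OF carrier w] Aw by simp
    finally have "(\<Sum>k<n. w $ k * w $ k) = 0" .
    hence "\<forall>k\<in>{..<n}. w $ k * w $ k = 0"
      by (subst (asm) sum_nonneg_eq_0_iff) auto
    hence "A *\<^sub>v v = 0\<^sub>v n" unfolding w_def[symmetric] using w by (intro eq_vecI) auto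
    thus "v \<in> mat_kernel A" by (rule mat_kernelI[OF carrier v(1)])
  qed
  show "mat_kernel A \<subseteq> mat_kernel (A * A)"
  proof
    fix v assume "v \<in> mat_kernel A"
    hence v: "v \<in> carrier_vec n" "A *\<^sub>v v = 0\<^sub>v n" using mat_kernelD[OF carrier] by auto
    have "(A * A) *\<^sub>v v = 0\<^sub>v n"
      using carrier v by (simp add: assoc_mult_mat_vec) (intro eq_vecI, auto simp: scalar_prod_def)
    thus "v \<in> mat_kernel (A * A)" by (rule mat_kernelI[OF AA v(1)])
  qed
qed

text \<open>Since the kernel of a symmetric matrix does not grow when the matrix is squared,
  generalised eigenvectors are eigenvectors and all Jordan blocks are trivial.\<close>
lemma jordan_nf_block_size:
  assumes jnf: "jordan_nf A n_as" and block: "(m, e) \<in> set n_as"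
  shows "m = 1"
proof -
  define C where "C = char_matrix A e"
  interpret C: sym_mat n C
    by unfold_locales (use carrier symmetric in \<open>auto simp: C_def char_matrix_def\<close>)
  have "C ^\<^sub>m 1 = C" and "C ^\<^sub>m 2 = C * C" using C.carrier by (simp_all add: numeral_2_eq_2)
  hence "dim_gen_eigenspace A e 1 = dim_gen_eigenspace A e 2"
    unfolding dim_gen_eigenspace_def C_def[symmetric] kernel_dim_def
    using C.mat_kernel_square by simp
  hence "sum_list (map (min 1) (map fst [(n, e')\<leftarrow>n_as . e' = e]))
       = sum_list (map (min 2) (map fst [(n, e')\<leftarrow>n_as . e' = e]))"
    unfolding dim_gen_eigenspace[OF jnf] by simp
  moreover have "0 \<notin> set (map fst [(n, e')\<leftarrow>n_as . e' = e])"
    using jnf unfolding jordan_nf_def by force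
  moreover have "m \<in> set (map fst [(n, e')\<leftarrow>n_as . e' = e])" using block by force
  ultimately show "m = 1" by (rule sum_list_min_1_eq_min_2)
qed

lemma mat_app_cong: "(\<And>j. j < n \<Longrightarrow> x j = y j) \<Longrightarrow> mat_app x k = mat_app y k"
  unfolding mat_app_def by simp

lemma mat_app_diff: "mat_app (\<lambda>j. a * x j - b * y j) k = a * mat_app x k - b * mat_app y k"
  unfolding mat_app_def by (simp add: sum_subtractf sum_distrib_left algebra_simps)

lemma mat_app_sum: "finite I \<Longrightarrow> mat_app (\<lambda>j. \<Sum>i\<in>I. f i j) k = (\<Sum>i\<in>I. mat_app (f i) k)"
  unfolding mat_app_def by (simp add: sum_distrib_left sum.swap[of _ I])

lemma mat_app_scale: "mat_app (\<lambda>j. a * x j) k = a * mat_app x k"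
  unfolding mat_app_def by (simp add: sum_distrib_left algebra_simps)

lemma dot_commute: "dot x y = dot y x"
  unfolding dot_def by (simp add: mult.commute)

lemma dot_cong:
  "(\<And>k. k < n \<Longrightarrow> x k = x' k) \<Longrightarrow> (\<And>k. k < n \<Longrightarrow> y k = y' k) \<Longrightarrow> dot x y = dot x' y'"
  unfolding dot_def by simp

lemma dot_self_nonneg: "dot x x \<ge> 0"
  unfolding dot_def by (intro sum_nonneg) auto

lemma dot_self_eq_0_iff: "dot x x = 0 \<longleftrightarrow> (\<forall>k<n. x k = 0)"
  unfolding dot_def by (subst sum_nonneg_eq_0_iff) auto

lemma dot_sum_sum:
  "finite I \<Longrightarrow> finite J \<Longrightarrow>
    dot (\<lambda>k. \<Sum>i\<in>I. f i k) (\<lambda>k. \<Sum>j\<in>J. g j k) = (\<Sum>i\<in>I. \<Sum>j\<in>J. dot (f i) (g j))"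
  unfolding dot_def by (simp add: sum_product sum.swap[of _ "{..<n}"])

lemma dot_scale_right: "dot x (\<lambda>k. a * y k) = a * dot x y"
  unfolding dot_def by (simp add: sum_distrib_left algebra_simps)

lemma dot_sum_right: "finite I \<Longrightarrow> dot x (\<lambda>k. \<Sum>i\<in>I. f i k) = (\<Sum>i\<in>I. dot x (f i))"
  unfolding dot_def by (simp add: sum_distrib_left sum.swap[of _ "{..<n}"])

lemma dot_mat_app_commute: "dot x (mat_app y) = dot y (mat_app x)"
proof -
  have "dot x (mat_app y) = (\<Sum>k<n. \<Sum>j<n. x k * A $$ (k, j) * y j)"
    unfolding dot_def mat_app_def by (simp add: sum_distrib_left mult.assoc)
  also have "\<dots> = (\<Sum>j<n. \<Sum>k<n. y j * A $$ (j, k) * x k)"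
    by (subst sum.swap) (auto simp: symmetric mult_ac intro!: sum.cong)
  also have "\<dots> = dot y (mat_app x)"
    unfolding dot_def mat_app_def by (simp add: sum_distrib_left mult.assoc)
  finally show ?thesis .
qed

lemma dot_mat_app_eigen: "in_eigenspace \<mu> x \<Longrightarrow> dot y (mat_app x) = \<mu> * dot y x"
  unfolding dot_def in_eigenspace_def by (simp add: sum_distrib_left algebra_simps)

lemma eigenspaces_orthogonal:
  assumes "in_eigenspace a x" "in_eigenspace b y" "a \<noteq> b"
  shows "dot x y = 0"
proof -
  have "a * dot y x = b * dot x y"
    using dot_mat_app_commute[of y x] dot_mat_app_eigen assms by simp
  hence "(a - b) * dot x y = 0" by (simp add: dot_commute algebra_simps)
  thus ?thesis using assms(3) by simp
qed

lemma dot_diff_orthogonal: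
  assumes "dot x y = 0"
  shows "dot (\<lambda>k. a * x k - b * y k) (\<lambda>k. a * x k - b * y k) = a\<^sup>2 * dot x x + b\<^sup>2 * dot y y"
proof -
  have "dot (\<lambda>k. a * x k - b * y k) (\<lambda>k. a * x k - b * y k)
      = a\<^sup>2 * dot x x + b\<^sup>2 * dot y y - 2 * a * b * dot x y"
    unfolding dot_def
    by (simp add: sum_subtractf sum.distrib sum_distrib_left algebra_simps power2_eq_square)
  thus ?thesis using assms by simp
qed

lemma dot_mat_app_diff_orthogonal:
  assumes "dot x (mat_app y) = 0"
  shows "dot (\<lambda>k. a * x k - b * y k) (mat_app (\<lambda>k. a * x k - b * y k))
    = a\<^sup>2 * dot x (mat_app x) + b\<^sup>2 * dot y (mat_app y)"
proof -
  have "dot y (mat_app x) = 0" using assms dot_mat_app_commute[of x y] by simp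
  moreover have "dot (\<lambda>k. a * x k - b * y k) (mat_app (\<lambda>k. a * x k - b * y k))
      = a\<^sup>2 * dot x (mat_app x) + b\<^sup>2 * dot y (mat_app y)
        - a * b * (dot x (mat_app y) + dot y (mat_app x))"
    unfolding dot_def mat_app_diff
    by (simp add: sum_subtractf sum.distrib sum_distrib_left algebra_simps power2_eq_square)
  ultimately show ?thesis using assms by simp
qed

lemma dot_orthogonal_components:
  assumes "finite D" and z: "\<And>l. in_eigenspace l (z l)" and y: "\<And>k. k < n \<Longrightarrow> y k = (\<Sum>l\<in>D. z l k)"
  shows "dot y y = (\<Sum>l\<in>D. dot (z l) (z l))"
    and "dot y (mat_app y) = (\<Sum>l\<in>D. l * dot (z l) (z l))"
    and "l \<in> D \<Longrightarrow> dot (z l) y = dot (z l) (z l)"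
proof -
  define w where "w l = dot (z l) (z l)" for l
  have orth: "dot (z l) (z l') = (if l = l' then w l else 0)" for l l'
    using eigenspaces_orthogonal[OF z z] unfolding w_def by simp
  hence orth_scaled: "dot (z l) (\<lambda>k. a * z l' k) = (if l = l' then a * w l else 0)" for l l' a
    by (simp add: dot_scale_right)
  have "dot y y = dot (\<lambda>k. \<Sum>l\<in>D. z l k) (\<lambda>k. \<Sum>l\<in>D. z l k)"
    using y by (intro dot_cong) simp_all
  thus "dot y y = (\<Sum>l\<in>D. dot (z l) (z l))"
    using \<open>finite D\<close> unfolding w_def[symmetric] by (simp add: dot_sum_sum orth sum.delta)
  have "mat_app y k = (\<Sum>l\<in>D. l * z l k)" if "k < n" for k
  proof -
    have "mat_app y k = mat_app (\<lambda>j. \<Sum>l\<in>D. z l j) k" by (rule mat_app_cong) (rule y)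
    thus ?thesis using z that unfolding mat_app_sum[OF \<open>finite D\<close>] in_eigenspace_def by simp
  qed
  hence "dot y (mat_app y) = dot (\<lambda>k. \<Sum>l\<in>D. z l k) (\<lambda>k. \<Sum>l\<in>D. l * z l k)"
    using y by (intro dot_cong) simp_all
  thus "dot y (mat_app y) = (\<Sum>l\<in>D. l * dot (z l) (z l))"
    using \<open>finite D\<close> unfolding w_def[symmetric] by (simp add: dot_sum_sum orth_scaled sum.delta)
  assume "l \<in> D"
  have "dot (z l) y = dot (z l) (\<lambda>k. \<Sum>l'\<in>D. z l' k)" using y by (intro dot_cong) simp_all
  also have "\<dots> = (\<Sum>l'\<in>D. if l = l' then w l else 0)"
    unfolding dot_sum_right[OF \<open>finite D\<close>] orth ..
  finally show "dot (z l) y = dot (z l) (z l)" using \<open>finite D\<close> \<open>l \<in> D\<close> unfolding w_def by simp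
qed

lemma eigenvalue_iff_in_eigenspace:
  "eigenvalue A \<mu> \<longleftrightarrow> (\<exists>x. (\<exists>k<n. x k \<noteq> 0) \<and> in_eigenspace \<mu> x)"
proof
  assume "eigenvalue A \<mu>"
  then obtain v where v: "v \<in> carrier_vec n" "v \<noteq> 0\<^sub>v n" "A *\<^sub>v v = \<mu> \<cdot>\<^sub>v v"
    unfolding eigenvalue_def eigenvector_def using carrier by auto
  have "\<exists>k<n. v $ k \<noteq> 0"
    using v(1,2) by (metis carrier_vecD eq_vecI index_zero_vec(1,2))
  moreover have "in_eigenspace \<mu> (\<lambda>k. v $ k)"
    unfolding in_eigenspace_def mat_app_def
    using index_mult_mat_vec_sum[OF carrier v(1)] v by (metis index_smult_vec(1) carrier_vecD)
  ultimately show "\<exists>x. (\<exists>k<n. x k \<noteq> 0) \<and> in_eigenspace \<mu> x" by blast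
next
  assume "\<exists>x. (\<exists>k<n. x k \<noteq> 0) \<and> in_eigenspace \<mu> x"
  then obtain x k where k: "k < n" "x k \<noteq> 0" and x: "in_eigenspace \<mu> x" by auto
  have "vec n x \<noteq> 0\<^sub>v n" using k by (metis index_vec index_zero_vec(1))
  moreover have "A *\<^sub>v vec n x = \<mu> \<cdot>\<^sub>v vec n x"
  proof (rule eq_vecI)
    fix k assume "k < dim_vec (\<mu> \<cdot>\<^sub>v vec n x)"
    hence k: "k < n" by simp
    show "(A *\<^sub>v vec n x) $ k = (\<mu> \<cdot>\<^sub>v vec n x) $ k"
      using index_mult_mat_vec_sum[OF carrier _ k, of "vec n x"] x k
      unfolding in_eigenspace_def mat_app_def by simp
  qed (use carrier in simp)
  ultimately show "eigenvalue A \<mu>"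
    unfolding eigenvalue_def eigenvector_def using carrier by (auto intro!: exI[of _ "vec n x"])
qed

end

locale sym_eigenbasis = sym_mat +
  fixes d :: "nat \<Rightarrow> real" and q :: "nat \<Rightarrow> nat \<Rightarrow> real"
  assumes eigen: "\<And>i. i < n \<Longrightarrow> in_eigenspace (d i) (q i)"
    and eig_mult_eq_card: "\<And>\<mu>. eig_mult A \<mu> = card {i. i < n \<and> d i = \<mu>}"
    and spanning: "\<And>y. \<exists>c. \<forall>k<n. y k = (\<Sum>i<n. c i * q i k)"
    and independent: "\<And>c i. (\<And>k. k < n \<Longrightarrow> (\<Sum>i<n. c i * q i k) = 0) \<Longrightarrow> i < n \<Longrightarrow> c i = 0"

lemma (in sym_mat) diagonalizable:
  obtains P Q :: "real mat" and es :: "real list"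
  where "P \<in> carrier_mat n n" "Q \<in> carrier_mat n n" "P * Q = 1\<^sub>m n" "Q * P = 1\<^sub>m n"
    and "\<And>i k. i < n \<Longrightarrow> k < n \<Longrightarrow> (A * P) $$ (k, i) = es ! i * P $$ (k, i)"
    and "\<And>\<mu>. eig_mult A \<mu> = card {i. i < n \<and> es ! i = \<mu>}"
proof -
  obtain as where "char_poly A = (\<Prod>a\<leftarrow>as. [:- a, 1:])" using char_poly_splits by blast
  then obtain n_as where jnf: "jordan_nf A n_as" using jordan_nf_exists[OF carrier] by blast
  define es where "es = map snd n_as"
  have "map (\<lambda>p. (1, snd p)) n_as = n_as"
    using jordan_nf_block_size[OF jnf] by (intro map_idI) (metis prod.collapse)
  hence n_as: "n_as = map (\<lambda>a. (1, a)) es" unfolding es_def by (simp add: o_def)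
  obtain P Q where "similar_mat_wit A (jordan_matrix n_as) P Q"
    using jnf unfolding jordan_nf_def similar_mat_def by auto
  note PQ = similar_mat_witD2[OF carrier this]
  have "length es = sum_list (map fst n_as)" unfolding n_as by (induct es) auto
  hence len: "length es = n" using PQ(5) by auto
  define J where "J = jordan_matrix n_as"
  have J: "J \<in> carrier_mat n n" using PQ unfolding J_def by auto
  have J_index: "J $$ (i, j) = (if i = j then es ! i else 0)" if "i < n" "j < n" for i j
    unfolding J_def n_as using jordan_matrix_size_one[of i es j] that len by simp
  have "A * P = P * J * (Q * P)"
    using PQ J unfolding J_def by (simp add: assoc_mult_mat[of _ n n _ n _ n])
  hence AP: "A * P = P * J" using PQ J by simp
  have "(A * P) $$ (k, i) = es ! i * P $$ (k, i)" if "i < n" "k < n" for i k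
  proof -
    have "(A * P) $$ (k, i) = (\<Sum>j<n. P $$ (k, j) * (if j = i then es ! i else 0))"
      unfolding AP index_mult_mat_sum[OF PQ(6) J that(2,1)]
      using that by (intro sum.cong refl) (simp add: J_index)
    thus ?thesis using that(1) by (simp add: if_distrib cong: if_cong)
  qed
  moreover have "eig_mult A \<mu> = card {i. i < n \<and> es ! i = \<mu>}" for \<mu>
  proof -
    have "eig_mult A \<mu> = sum_list (map fst (filter (\<lambda>na. snd na = \<mu>) n_as))"
      unfolding eig_mult_def by (rule jordan_nf_order[OF jnf])
    also have "\<dots> = length (filter (\<lambda>a. a = \<mu>) es)" unfolding n_as by (induct es) auto
    finally show ?thesis unfolding length_filter_conv_card len .
  qed
  ultimately show ?thesis using that PQ(1,2,6,7) by blast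
qed

lemma (in sym_mat) eigenbasis_exists: "\<exists>d q. sym_eigenbasis n A d q"
proof -
  obtain P Q :: "real mat" and es :: "real list"
    where PQ: "P \<in> carrier_mat n n" "Q \<in> carrier_mat n n" "P * Q = 1\<^sub>m n" "Q * P = 1\<^sub>m n"
      and AP: "\<And>i k. i < n \<Longrightarrow> k < n \<Longrightarrow> (A * P) $$ (k, i) = es ! i * P $$ (k, i)"
      and mult: "\<And>\<mu>. eig_mult A \<mu> = card {i. i < n \<and> es ! i = \<mu>}"
    using diagonalizable by blast
  define q where "q i k = P $$ (k, i)" for i k
  have "sym_eigenbasis n A (\<lambda>i. es ! i) q"
  proof (unfold_locales)
    show "in_eigenspace (es ! i) (q i)" if "i < n" for i
      unfolding in_eigenspace_def mat_app_def q_def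
      using AP[OF that] index_mult_mat_sum[OF carrier PQ(1) _ that] by simp
    show "\<exists>c. \<forall>k<n. y k = (\<Sum>i<n. c i * q i k)" for y
      unfolding q_def by (rule mat_columns_span[OF PQ(1-3)])
    show "c i = 0" if "\<And>k. k < n \<Longrightarrow> (\<Sum>i<n. c i * q i k) = 0" "i < n" for c i
      using that unfolding q_def by (rule mat_columns_independent[OF PQ(1,2,4)])
  qed (rule mult)
  thus ?thesis by blast
qed

lemma homogeneous_system_nontrivial_solution:
  fixes f :: "'s \<Rightarrow> 'i \<Rightarrow> real"
  assumes "finite S" "finite I" "card S < card I"
  shows "\<exists>c. (\<exists>i\<in>I. c i \<noteq> 0) \<and> (\<forall>s\<in>S. (\<Sum>i\<in>I. c i * f s i) = 0)"
  using assms
proof (induction S arbitrary: I f rule: finite_induct)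
  case empty
  then obtain i where "i \<in> I" by fastforce
  thus ?case by (intro exI[of _ "\<lambda>_. 1"]) auto
next
  case (insert s0 S)
  show ?case
  proof (cases "\<forall>i\<in>I. f s0 i = 0")
    case True
    obtain c where "\<exists>i\<in>I. c i \<noteq> 0" "\<forall>s\<in>S. (\<Sum>i\<in>I. c i * f s i) = 0"
      using insert.IH[OF insert.prems(1), of f] insert.prems(2) insert.hyps by auto
    thus ?thesis using True by (intro exI[of _ c]) auto
  next
    case False
    then obtain i0 where i0: "i0 \<in> I" "f s0 i0 \<noteq> 0" by auto
    define I' where "I' = I - {i0}"
    define g where "g s i = f s i - f s i0 * f s0 i / f s0 i0" for s i
    have "finite I'" "card S < card I'" unfolding I'_def using insert.prems insert.hyps i0 by auto
    then obtain c' where c': "\<exists>i\<in>I'. c' i \<noteq> 0" "\<forall>s\<in>S. (\<Sum>i\<in>I'. c' i * g s i) = 0"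
      using insert.IH[of I' g] by blast
    define c where "c i = (if i = i0 then - (\<Sum>i\<in>I'. c' i * f s0 i) / f s0 i0 else c' i)" for i
    have split: "(\<Sum>i\<in>I. c i * f s i) = c i0 * f s i0 + (\<Sum>i\<in>I'. c' i * f s i)" for s
    proof -
      have "(\<Sum>i\<in>I'. c i * f s i) = (\<Sum>i\<in>I'. c' i * f s i)"
        unfolding c_def I'_def by (intro sum.cong) auto
      thus ?thesis unfolding I'_def sum.remove[OF insert.prems(1) i0(1)] by simp
    qed
    have "(\<Sum>i\<in>I. c i * f s i) = 0" if "s \<in> insert s0 S" for s
    proof (cases "s = s0")
      case True
      thus ?thesis unfolding split using i0 by (simp add: c_def)
    next
      case False
      have "(\<Sum>i\<in>I'. c' i * g s i)
          = (\<Sum>i\<in>I'. c' i * f s i) - f s i0 * (\<Sum>i\<in>I'. c' i * f s0 i) / f s0 i0"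
        unfolding g_def by (simp add: algebra_simps sum_subtractf sum_distrib_left sum_divide_distrib)
      hence "(\<Sum>i\<in>I'. c' i * f s i) - f s i0 * (\<Sum>i\<in>I'. c' i * f s0 i) / f s0 i0 = 0"
        using c'(2) that False by simp
      thus ?thesis unfolding split by (simp add: c_def algebra_simps)
    qed
    moreover have "\<exists>i\<in>I. c i \<noteq> 0" using c'(1) unfolding c_def I'_def by auto
    ultimately show ?thesis by blast
  qed
qed


context sym_eigenbasis
begin

lemma q_nonzero:
  assumes "i < n" shows "\<exists>k<n. q i k \<noteq> 0"
proof (rule ccontr)
  assume "\<not> ?thesis"
  hence "(\<Sum>j<n. (if j = i then 1 else 0) * q j k) = 0" if "k < n" for k
    using that assms by (simp add: if_distrib cong: if_cong)
  thus False using independent[of "\<lambda>j. if j = i then 1 else 0" i] assms by auto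
qed

lemma mat_app_lin_comb:
  assumes "\<And>k. k < n \<Longrightarrow> x k = (\<Sum>i<n. c i * q i k)" and "k < n"
  shows "mat_app x k = (\<Sum>i<n. c i * d i * q i k)"
proof -
  have "mat_app x k = mat_app (\<lambda>j. \<Sum>i<n. c i * q i j) k"
    using assms(1) by (rule mat_app_cong)
  also have "\<dots> = (\<Sum>i<n. c i * mat_app (q i) k)"
    by (simp add: mat_app_sum mat_app_scale)
  also have "\<dots> = (\<Sum>i<n. c i * d i * q i k)"
    using eigen assms(2) unfolding in_eigenspace_def by (intro sum.cong refl) auto
  finally show ?thesis .
qed

lemma eigenvalue_iff_d: "eigenvalue A \<mu> \<longleftrightarrow> (\<exists>i<n. d i = \<mu>)"
proof
  assume "eigenvalue A \<mu>"
  then obtain x k0 where k0: "k0 < n" "x k0 \<noteq> 0" and x: "in_eigenspace \<mu> x"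
    unfolding eigenvalue_iff_in_eigenspace by auto
  obtain c where c: "\<forall>k<n. x k = (\<Sum>i<n. c i * q i k)" using spanning by blast
  have "(\<Sum>i<n. (c i * (d i - \<mu>)) * q i k) = 0" if k: "k < n" for k
  proof -
    have "(\<Sum>i<n. (c i * (d i - \<mu>)) * q i k) = mat_app x k - \<mu> * x k"
      using mat_app_lin_comb[of x c k] c k
      by (simp add: algebra_simps sum_subtractf sum_distrib_left)
    thus ?thesis using x k unfolding in_eigenspace_def by simp
  qed
  hence "c i * (d i - \<mu>) = 0" if "i < n" for i
    using independent[of "\<lambda>i. c i * (d i - \<mu>)"] that by blast
  moreover have "\<exists>i<n. c i \<noteq> 0"
  proof (rule ccontr)
    assume "\<not> ?thesis"
    hence "x k0 = 0" using c k0 by simp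
    with k0 show False by simp
  qed
  ultimately show "\<exists>i<n. d i = \<mu>" by force
next
  assume "\<exists>i<n. d i = \<mu>"
  thus "eigenvalue A \<mu>" unfolding eigenvalue_iff_in_eigenspace using eigen q_nonzero by blast
qed

lemma sum_eig_mult_le:
  "(\<Sum>x\<in>{x. eigenvalue A x \<and> x \<le> \<mu>}. eig_mult A x) = card {i. i < n \<and> d i \<le> \<mu>}"
proof -
  define T where "T = {i. i < n \<and> d i \<le> \<mu>}"
  have "finite T" unfolding T_def by simp
  have "{x. eigenvalue A x \<and> x \<le> \<mu>} = d ` T" unfolding T_def eigenvalue_iff_d by auto
  moreover have "card {i. i < n \<and> d i = x} = card {i \<in> T. d i = x}" if "x \<in> d ` T" for x
    using that unfolding T_def by (auto intro!: arg_cong[where f = card])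
  ultimately have "(\<Sum>x\<in>{x. eigenvalue A x \<and> x \<le> \<mu>}. eig_mult A x) = (\<Sum>x\<in>d ` T. card {i \<in> T. d i = x})"
    unfolding eig_mult_eq_card by simp
  also have "\<dots> = card T"
    unfolding card_eq_sum by (rule sum.image_gen[OF \<open>finite T\<close>, symmetric])
  finally show ?thesis unfolding T_def .
qed

lemma kth_eigenvalue_le:
  assumes "i < n" and "k \<le> card {j. j < n \<and> d j \<le> d i}"
  shows "kth_eigenvalue A k \<le> d i"
  unfolding kth_eigenvalue_def
proof (rule Min_le)
  show "finite {\<mu>. eigenvalue A \<mu> \<and> k \<le> (\<Sum>x\<in>{x. eigenvalue A x \<and> x \<le> \<mu>}. eig_mult A x)}"
    by (rule finite_subset[of _ "d ` {..<n}"]) (auto simp: eigenvalue_iff_d)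
  show "d i \<in> {\<mu>. eigenvalue A \<mu> \<and> k \<le> (\<Sum>x\<in>{x. eigenvalue A x \<and> x \<le> \<mu>}. eig_mult A x)}"
    using assms unfolding sum_eig_mult_le by (auto simp: eigenvalue_iff_d)
qed

lemma eig_mult_le_card:
  assumes "finite S"
    and determined: "\<And>x. in_eigenspace \<mu> x \<Longrightarrow> \<forall>s\<in>S. x s = 0 \<Longrightarrow> \<forall>k<n. x k = 0"
  shows "eig_mult A \<mu> \<le> card S"
proof (rule ccontr)
  define I where "I = {i. i < n \<and> d i = \<mu>}"
  assume "\<not> ?thesis"
  hence "card S < card I" unfolding eig_mult_eq_card I_def by simp
  then obtain c where c: "\<exists>i\<in>I. c i \<noteq> 0" "\<forall>s\<in>S. (\<Sum>i\<in>I. c i * q i s) = 0"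
    using homogeneous_system_nontrivial_solution[OF \<open>finite S\<close>, of I "\<lambda>s i. q i s"]
    unfolding I_def by auto
  define c' where "c' i = (if i \<in> I then c i else 0)" for i
  define x where "x k = (\<Sum>i<n. c' i * q i k)" for k
  have x_I: "x k = (\<Sum>i\<in>I. c i * q i k)" for k
    unfolding x_def c'_def by (rule sum.mono_neutral_cong_right) (auto simp: I_def)
  have "in_eigenspace \<mu> x" unfolding in_eigenspace_def
  proof (intro allI impI)
    fix k assume "k < n"
    hence "mat_app x k = (\<Sum>i<n. c' i * d i * q i k)" by (rule mat_app_lin_comb[OF x_def])
    also have "\<dots> = \<mu> * x k"
      unfolding x_def c'_def I_def sum_distrib_left by (intro sum.cong) auto
    finally show "mat_app x k = \<mu> * x k" .
  qed
  moreover have "\<forall>s\<in>S. x s = 0" using c(2) x_I by simp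
  ultimately have "\<forall>k<n. x k = 0" by (rule determined)
  then have "c' i = 0" if "i \<in> I" for i
    using independent[of c' i] that unfolding x_def I_def by auto
  with c(1) show False unfolding c'_def by auto
qed

lemma eigenspace_components:
  obtains z where "\<And>l. in_eigenspace l (z l)" and "\<And>k. k < n \<Longrightarrow> y k = (\<Sum>l\<in>d ` {..<n}. z l k)"
proof -
  obtain c where c: "\<forall>k<n. y k = (\<Sum>i<n. c i * q i k)" using spanning by blast
  define z where "z l k = (\<Sum>i<n. (if d i = l then c i else 0) * q i k)" for l k
  have "in_eigenspace l (z l)" for l
    unfolding in_eigenspace_def
  proof (intro allI impI)
    fix k assume "k < n"
    hence "mat_app (z l) k = (\<Sum>i<n. (if d i = l then c i else 0) * d i * q i k)"
      by (rule mat_app_lin_comb[OF z_def])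
    also have "\<dots> = l * z l k" unfolding z_def sum_distrib_left by (intro sum.cong) auto
    finally show "mat_app (z l) k = l * z l k" .
  qed
  moreover have "y k = (\<Sum>l\<in>d ` {..<n}. z l k)" if "k < n" for k
  proof -
    have "(\<Sum>l\<in>d ` {..<n}. z l k) = (\<Sum>i<n. \<Sum>l\<in>d ` {..<n}. if d i = l then c i * q i k else 0)"
      unfolding z_def by (subst sum.swap) (auto intro!: sum.cong)
    also have "\<dots> = (\<Sum>i<n. c i * q i k)" by (intro sum.cong refl) simp
    finally show ?thesis using c that by simp
  qed
  ultimately show ?thesis by (rule that)
qed

lemma in_eigenspace_if_rayleigh_le:
  assumes orth: "\<And>\<mu> x. \<mu> < \<theta> \<Longrightarrow> in_eigenspace \<mu> x \<Longrightarrow> dot x y = 0"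
    and le: "dot y (mat_app y) \<le> \<theta> * dot y y"
  shows "in_eigenspace \<theta> y"
proof -
  define D where "D = d ` {..<n}"
  have "finite D" unfolding D_def by simp
  obtain z where z: "\<And>l. in_eigenspace l (z l)" and y: "\<And>k. k < n \<Longrightarrow> y k = (\<Sum>l\<in>D. z l k)"
    by (fact eigenspace_components[where y = y, folded D_def])
  have yy: "dot y y = (\<Sum>l\<in>D. dot (z l) (z l))"
    and yAy: "dot y (mat_app y) = (\<Sum>l\<in>D. l * dot (z l) (z l))"
    and zy: "\<And>l. l \<in> D \<Longrightarrow> dot (z l) y = dot (z l) (z l)"
    using dot_orthogonal_components[OF \<open>finite D\<close> z y] by simp_all
  have nonneg: "(l - \<theta>) * dot (z l) (z l) \<ge> 0" if "l \<in> D" for l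
  proof (cases "l < \<theta>")
    case True
    thus ?thesis using zy[OF that] orth[OF True z] by simp
  qed (use dot_self_nonneg[of "z l"] in simp)
  moreover have "(\<Sum>l\<in>D. (l - \<theta>) * dot (z l) (z l)) \<le> 0"
    using le unfolding yy yAy by (simp add: algebra_simps sum_subtractf sum_distrib_left)
  ultimately have "(\<Sum>l\<in>D. (l - \<theta>) * dot (z l) (z l)) = 0"
    by (meson antisym sum_nonneg)
  hence zero_terms: "\<forall>l\<in>D. (l - \<theta>) * dot (z l) (z l) = 0"
    using sum_nonneg_eq_0_iff[OF \<open>finite D\<close> nonneg] by simp
  have z_zero: "z l k = 0" if "l \<in> D" "l \<noteq> \<theta>" "k < n" for l k
  proof -
    have "dot (z l) (z l) = 0" using zero_terms that(1,2) by auto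
    thus ?thesis using that(3) dot_self_eq_0_iff by blast
  qed
  have "mat_app y k = \<theta> * y k" if "k < n" for k
  proof -
    have "mat_app y k = mat_app (\<lambda>j. \<Sum>l\<in>D. z l j) k" by (rule mat_app_cong) (rule y)
    also have "\<dots> = (\<Sum>l\<in>D. \<theta> * z l k)"
      using z that z_zero
      unfolding mat_app_sum[OF \<open>finite D\<close>] in_eigenspace_def by (intro sum.cong) auto
    finally show ?thesis using y[OF that] by (simp add: sum_distrib_left)
  qed
  thus ?thesis unfolding in_eigenspace_def by blast
qed

end

section \<open>Graph Laplacians\<close>

locale graph =
  fixes n :: nat and E :: "nat \<Rightarrow> nat \<Rightarrow> bool"
  assumes simple: "simple_graph n E"
begin

lemma edge_sym: "i < n \<Longrightarrow> j < n \<Longrightarrow> E i j \<longleftrightarrow> E j i"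
  using simple unfolding simple_graph_def by blast

lemma no_loop: "i < n \<Longrightarrow> \<not> E i i"
  using simple unfolding simple_graph_def by blast

lemma laplacian_index:
  "k < n \<Longrightarrow> j < n \<Longrightarrow> laplacian n E $$ (k, j)
    = (if k = j then real (degree n E k) else 0) - (if E k j then 1 else 0)"
  unfolding laplacian_def by simp

sublocale sym_mat n "laplacian n E"
  by unfold_locales (auto simp: laplacian_index edge_sym, simp add: laplacian_def)

lemma degree_eq_sum: "real (degree n E k) = (\<Sum>j<n. if E k j then 1 else 0)"
proof -
  have "{j. j < n \<and> E k j} = {..<n} \<inter> {j. E k j}" by auto
  thus ?thesis unfolding degree_def by (simp add: sum.If_cases)
qed

lemma mat_app_laplacian: "k < n \<Longrightarrow> mat_app x k = (\<Sum>j<n. if E k j then x k - x j else 0)"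
proof -
  assume k: "k < n"
  have "mat_app x k
      = (\<Sum>j<n. (if k = j then real (degree n E k) * x j else 0) - (if E k j then x j else 0))"
    unfolding mat_app_def by (intro sum.cong refl) (auto simp: laplacian_index k algebra_simps)
  also have "\<dots> = real (degree n E k) * x k - (\<Sum>j<n. if E k j then x j else 0)"
    using k by (simp add: sum_subtractf sum.delta)
  also have "\<dots> = (\<Sum>j<n. if E k j then x k - x j else 0)"
    unfolding degree_eq_sum
    by (simp add: sum_distrib_right sum_subtractf[symmetric] if_distrib cong: if_cong)
  finally show ?thesis .
qed

lemma mat_app_laplacian_at_zero:
  "k < n \<Longrightarrow> x k = 0 \<Longrightarrow> mat_app x k = - (\<Sum>j<n. if E k j then x j else 0)"
  by (simp add: mat_app_laplacian sum_negf[symmetric] if_distrib cong: if_cong)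

lemma laplacian_quadratic_form:
  "dot x (mat_app x) = (\<Sum>k<n. \<Sum>j<n. if E k j then (x k - x j)\<^sup>2 else 0) / 2"
proof -
  have half: "dot x (mat_app x) = (\<Sum>k<n. \<Sum>j<n. if E k j then x k * x k - x k * x j else 0)"
    unfolding dot_def by (intro sum.cong refl)
      (simp add: mat_app_laplacian sum_distrib_left algebra_simps if_distrib cong: if_cong)
  have "(\<Sum>k<n. \<Sum>j<n. if E k j then x k * x k - x k * x j else 0)
      = (\<Sum>j<n. \<Sum>k<n. if E k j then x k * x k - x k * x j else 0)"
    by (rule sum.swap)
  also have "\<dots> = (\<Sum>j<n. \<Sum>k<n. if E j k then x k * x k - x k * x j else 0)"
    using edge_sym by (intro sum.cong refl) auto
  finally have other_half:
    "dot x (mat_app x) = (\<Sum>k<n. \<Sum>j<n. if E k j then x j * x j - x j * x k else 0)"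
    unfolding half .
  have "(\<Sum>k<n. \<Sum>j<n. if E k j then (x k - x j)\<^sup>2 else 0)
     = (\<Sum>k<n. \<Sum>j<n. (if E k j then x k * x k - x k * x j else 0)
                        + (if E k j then x j * x j - x j * x k else 0))"
    by (intro sum.cong refl) (simp add: power2_eq_square algebra_simps)
  also have "\<dots> = 2 * dot x (mat_app x)"
    unfolding sum.distrib half[symmetric] other_half[symmetric] by simp
  finally show ?thesis by simp
qed

lemma laplacian_quadratic_form_nonneg: "dot x (mat_app x) \<ge> 0"
  unfolding laplacian_quadratic_form by (intro divide_nonneg_pos sum_nonneg) auto

lemma laplacian_quadratic_form_abs: "dot (\<lambda>k. \<bar>x k\<bar>) (mat_app (\<lambda>k. \<bar>x k\<bar>)) \<le> dot x (mat_app x)"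
proof -
  have "(\<bar>x k\<bar> - \<bar>x j\<bar>)\<^sup>2 \<le> (x k - x j)\<^sup>2" for k j
    by (metis abs_ge_zero abs_triangle_ineq3 power2_abs power_mono)
  hence "(\<Sum>k<n. \<Sum>j<n. if E k j then (\<bar>x k\<bar> - \<bar>x j\<bar>)\<^sup>2 else 0)
      \<le> (\<Sum>k<n. \<Sum>j<n. if E k j then (x k - x j)\<^sup>2 else 0)"
    by (intro sum_mono) simp
  thus ?thesis unfolding laplacian_quadratic_form by (simp add: divide_right_mono)
qed

lemma laplacian_eigenvalue_nonneg:
  assumes "in_eigenspace \<mu> x" "k < n" "x k \<noteq> 0"
  shows "\<mu> \<ge> 0"
proof -
  have "dot x (mat_app x) = \<mu> * dot x x" using assms(1) by (rule dot_mat_app_eigen)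
  moreover have "dot x x > 0" using dot_self_nonneg[of x] dot_self_eq_0_iff[of x] assms(2,3) by force
  ultimately show ?thesis using laplacian_quadratic_form_nonneg[of x] by (simp add: zero_le_mult_iff)
qed

lemma in_eigenspace_0_const:
  assumes conn: "connected_graph n E" and x: "in_eigenspace 0 x" and "k < n" "j < n"
  shows "x k = x j"
proof -
  have "(\<Sum>k<n. \<Sum>j<n. if E k j then (x k - x j)\<^sup>2 else 0) = 0"
    using x laplacian_quadratic_form[of x] dot_mat_app_eigen[OF x, of x] by simp
  hence "\<forall>k\<in>{..<n}. \<forall>j\<in>{..<n}. (if E k j then (x k - x j)\<^sup>2 else 0) = 0"
    by (simp add: sum_nonneg_eq_0_iff sum_nonneg)
  hence edge: "x a = x b" if "a < n" "b < n" "E a b" for a b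
    using that by force
  have "(\<lambda>a b. a < n \<and> b < n \<and> E a b)\<^sup>*\<^sup>* k j"
    using conn \<open>k < n\<close> \<open>j < n\<close> unfolding connected_graph_def by blast
  thus ?thesis by (induction rule: rtranclp_induct) (auto dest: edge)
qed

lemma in_eigenspace_0_one: "in_eigenspace 0 (\<lambda>_. 1)"
  unfolding in_eigenspace_def by (simp add: mat_app_laplacian)

end

locale laplacian_eigenbasis = graph n E + sym_eigenbasis n "laplacian n E" d q
  for n E d q
begin

abbreviation mu2 :: real where
  "mu2 \<equiv> kth_eigenvalue (laplacian n E) 2"

lemma eigenvalue_below_mu2:
  assumes "i < n" and "d i < mu2"
  shows "d i = 0"
proof (rule ccontr)
  assume "d i \<noteq> 0"
  have "eigenvalue (laplacian n E) 0"
    unfolding eigenvalue_iff_in_eigenspace using in_eigenspace_0_one \<open>i < n\<close>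
    by (intro exI[of _ "\<lambda>_. 1"]) auto
  then obtain i0 where i0: "i0 < n" "d i0 = 0" unfolding eigenvalue_iff_d by blast
  obtain k where "k < n" "q i k \<noteq> 0" using q_nonzero[OF \<open>i < n\<close>] by blast
  hence "d i \<ge> 0" by (rule laplacian_eigenvalue_nonneg[OF eigen[OF \<open>i < n\<close>]])
  hence "{i0, i} \<subseteq> {j. j < n \<and> d j \<le> d i}" using i0 \<open>i < n\<close> by auto
  hence "card {i0, i} \<le> card {j. j < n \<and> d j \<le> d i}" by (rule card_mono[rotated]) simp
  moreover have "card {i0, i} = 2" using i0 \<open>d i \<noteq> 0\<close> by (cases "i0 = i") auto
  ultimately have "mu2 \<le> d i"
    using kth_eigenvalue_le[OF \<open>i < n\<close>] by simp
  thus False using assms(2) by simp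
qed

text \<open>On a connected graph the vectors below the second eigenvalue are the constants, so
  the min-max bound applies to every vector with zero sum.\<close>
lemma in_eigenspace_mu2_if_rayleigh_le:
  assumes conn: "connected_graph n E"
    and sum_zero: "(\<Sum>k<n. y k) = 0"
    and le: "dot y (mat_app y) \<le> mu2 * dot y y"
  shows "in_eigenspace mu2 y"
proof (rule in_eigenspace_if_rayleigh_le[OF _ le])
  fix \<mu> x
  assume below: "\<mu> < mu2" and x: "in_eigenspace \<mu> x"
  show "dot x y = 0"
  proof (cases "\<exists>k<n. x k \<noteq> 0")
    case True
    hence "eigenvalue (laplacian n E) \<mu>" unfolding eigenvalue_iff_in_eigenspace using x by blast
    then obtain i where "i < n" "d i = \<mu>" unfolding eigenvalue_iff_d by blast
    hence "\<mu> = 0" using eigenvalue_below_mu2[of i] below by simp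
    hence const: "x k = x 0" if "k < n" for k
      using in_eigenspace_0_const[OF conn, of x k 0] x that by simp
    have "dot x y = (\<Sum>k<n. x 0 * y k)"
      unfolding dot_def by (intro sum.cong refl) (metis const lessThan_iff)
    hence "dot x y = x 0 * (\<Sum>k<n. y k)" by (simp add: sum_distrib_left)
    thus ?thesis using sum_zero by simp
  qed (simp add: dot_def)
qed

end

section \<open>Branches of a tree\<close>

(* An abbreviation, so that it is literally the relation in connected_graph_def. *)
abbreviation adj :: "nat \<Rightarrow> (nat \<Rightarrow> nat \<Rightarrow> bool) \<Rightarrow> nat \<Rightarrow> nat \<Rightarrow> bool" where
  "adj n E \<equiv> \<lambda>a b. a < n \<and> b < n \<and> E a b"

definition remove_edge :: "(nat \<Rightarrow> nat \<Rightarrow> bool) \<Rightarrow> nat \<Rightarrow> nat \<Rightarrow> nat \<Rightarrow> nat \<Rightarrow> bool" where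
  "remove_edge E a b x y \<longleftrightarrow> E x y \<and> {x, y} \<noteq> {a, b}"

context graph
begin

lemma connected_parent_map:
  assumes conn: "connected_graph n E" and "0 < n"
  obtains p depth :: "nat \<Rightarrow> nat"
  where "\<And>k. 0 < k \<Longrightarrow> k < n \<Longrightarrow> p k < n \<and> E (p k) k \<and> depth (p k) < depth k"
proof -
  define depth where "depth k = (LEAST m. (adj n E ^^ m) 0 k)" for k
  have depth_path: "(adj n E ^^ depth k) 0 k" if "k < n" for k
  proof -
    have "(adj n E)\<^sup>*\<^sup>* 0 k" using conn that \<open>0 < n\<close> unfolding connected_graph_def by blast
    thus ?thesis unfolding depth_def by (rule LeastI_ex[OF rtranclp_imp_relpowp])
  qed
  have parent: "\<exists>j. j < n \<and> E j k \<and> depth j < depth k" if k: "0 < k" "k < n" for k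
  proof -
    obtain m where m: "depth k = Suc m"
    proof (cases "depth k")
      case 0
      thus ?thesis using depth_path[OF k(2)] k(1) by simp
    qed
    hence "(adj n E ^^ Suc m) 0 k" using depth_path[OF k(2)] by simp
    then obtain j where "(adj n E ^^ m) 0 j" "adj n E j k" by (rule relpowp_Suc_E)
    moreover from this(1) have "depth j \<le> m" unfolding depth_def by (rule Least_le)
    ultimately show ?thesis using m by auto
  qed
  have "\<forall>k. \<exists>j. 0 < k \<and> k < n \<longrightarrow> j < n \<and> E j k \<and> depth j < depth k" using parent by blast
  from choice[OF this] obtain p
    where "\<forall>k. 0 < k \<and> k < n \<longrightarrow> p k < n \<and> E (p k) k \<and> depth (p k) < depth k" by blast
  thus ?thesis using that[of p depth] by blast
qed

lemma connected_num_edges_ge: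
  assumes conn: "connected_graph n E" and "0 < n"
  shows "n - 1 \<le> num_edges n E"
proof -
  obtain p depth :: "nat \<Rightarrow> nat"
    where p: "\<And>k. 0 < k \<Longrightarrow> k < n \<Longrightarrow> p k < n \<and> E (p k) k \<and> depth (p k) < depth k"
    using connected_parent_map[OF assms] by blast
  define e where "e k = (min k (p k), max k (p k))" for k
  have "inj_on e {1..<n}"
  proof (rule inj_onI)
    fix k k' assume k: "k \<in> {1..<n}" and k': "k' \<in> {1..<n}" and "e k = e k'"
    hence "k = k' \<or> (k = p k' \<and> p k = k')" unfolding e_def by (auto simp: min_def max_def split: if_splits)
    moreover have "depth (p k) < depth k" "depth (p k') < depth k'" using p k k' by auto
    ultimately show "k = k'" by auto
  qed
  moreover have "e ` {1..<n} \<subseteq> {(i, j). i < j \<and> j < n \<and> E i j}"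
  proof
    fix x assume "x \<in> e ` {1..<n}"
    then obtain k where "k \<in> {1..<n}" "x = e k" by blast
    hence k: "0 < k" "k < n" "x = e k" by auto
    hence pk: "p k < n" "E (p k) k" using p by auto
    hence "p k \<noteq> k" "E k (p k)" using no_loop edge_sym k(2) by auto
    thus "x \<in> {(i, j). i < j \<and> j < n \<and> E i j}" using k pk unfolding e_def by (auto simp: min_def max_def)
  qed
  moreover have "finite {(i, j). i < j \<and> j < n \<and> E i j}"
    by (rule finite_subset[of _ "{..<n} \<times> {..<n}"]) auto
  ultimately have "card {1..<n} \<le> num_edges n E"
    unfolding num_edges_def by (rule card_inj_on_le)
  thus ?thesis by simp
qed

lemma graph_remove_edge: "graph n (remove_edge E a b)"
  using simple unfolding simple_graph_def remove_edge_def graph_def by (auto simp: insert_commute)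

lemma num_edges_remove_edge:
  assumes "a < n" "b < n" "E a b"
  shows "num_edges n (remove_edge E a b) = num_edges n E - 1"
proof -
  have "a \<noteq> b" using assms no_loop by blast
  have "{(i, j). i < j \<and> j < n \<and> remove_edge E a b i j}
      = {(i, j). i < j \<and> j < n \<and> E i j} - {(min a b, max a b)}"
    unfolding remove_edge_def using \<open>a \<noteq> b\<close> by (auto simp: min_def max_def doubleton_eq_iff)
  moreover have "(min a b, max a b) \<in> {(i, j). i < j \<and> j < n \<and> E i j}"
    using assms \<open>a \<noteq> b\<close> edge_sym by (auto simp: min_def max_def)
  moreover have "finite {(i, j). i < j \<and> j < n \<and> E i j}"
    by (rule finite_subset[of _ "{..<n} \<times> {..<n}"]) auto
  ultimately show ?thesis unfolding num_edges_def by simp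
qed

lemma connected_remove_edge:
  assumes conn: "connected_graph n E"
    and path: "(adj n (remove_edge E a b))\<^sup>*\<^sup>* a b"
  shows "connected_graph n (remove_edge E a b)"
proof -
  let ?R = "adj n (remove_edge E a b)"
  have "?R\<^sup>*\<^sup>* b a" using path graph.edge_sym[OF graph_remove_edge]
    by (metis (no_types, lifting) sympD symp_rtranclp symp_def)
  hence edge: "?R\<^sup>*\<^sup>* x y" if "adj n E x y" for x y
    using that path unfolding remove_edge_def by (cases "{x, y} = {a, b}") (auto simp: doubleton_eq_iff)
  have "?R\<^sup>*\<^sup>* i j" if "i < n" "j < n" for i j
  proof -
    have "(adj n E)\<^sup>*\<^sup>* i j" using conn that unfolding connected_graph_def by blast
    thus ?thesis by (induction rule: rtranclp_induct) (auto intro: rtranclp_trans edge)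
  qed
  thus ?thesis unfolding connected_graph_def by blast
qed

definition adj_avoiding :: "nat \<Rightarrow> nat \<Rightarrow> nat \<Rightarrow> bool" where
  "adj_avoiding v a b \<longleftrightarrow> a < n \<and> b < n \<and> a \<noteq> v \<and> b \<noteq> v \<and> E a b"

definition branch :: "nat \<Rightarrow> nat \<Rightarrow> nat set" where
  "branch v w = {k. (adj_avoiding v)\<^sup>*\<^sup>* w k}"

lemma symp_adj_avoiding: "symp (adj_avoiding v)"
  unfolding adj_avoiding_def symp_def using edge_sym by blast

lemma branch_self [simp]: "w \<in> branch v w"
  unfolding branch_def by simp

lemma branch_subset:
  assumes "w < n" "w \<noteq> v" "k \<in> branch v w"
  shows "k < n" "k \<noteq> v"
proof -
  have "(adj_avoiding v)\<^sup>*\<^sup>* w k" using assms(3) unfolding branch_def by simp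
  hence "k < n \<and> k \<noteq> v" by (induction rule: rtranclp_induct) (use assms in \<open>auto simp: adj_avoiding_def\<close>)
  thus "k < n" "k \<noteq> v" by blast+
qed

lemma branch_closed:
  assumes "w < n" "w \<noteq> v" "k \<in> branch v w" "j < n" "E k j" "j \<noteq> v"
  shows "j \<in> branch v w"
proof -
  have "adj_avoiding v k j" unfolding adj_avoiding_def using branch_subset[OF assms(1-3)] assms(4-6) by simp
  thus ?thesis using assms(3) unfolding branch_def by (simp add: rtranclp.rtrancl_into_rtrancl)
qed

end

locale tree = graph +
  assumes tree: "is_tree n E"
begin

lemma connected: "connected_graph n E"
  using tree unfolding is_tree_def by blast

text \<open>Otherwise deleting the edge from \<open>v\<close> to \<open>w1\<close> would leave a connected graph with
  \<open>n - 2\<close> edges.\<close>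
lemma no_path_avoiding_between_neighbours:
  assumes v: "v < n" and w: "w1 < n" "w2 < n" "E v w1" "E v w2" "w1 \<noteq> w2"
  shows "\<not> (adj_avoiding v)\<^sup>*\<^sup>* w1 w2"
proof
  assume path: "(adj_avoiding v)\<^sup>*\<^sup>* w1 w2"
  let ?E = "remove_edge E v w1"
  have "(adj_avoiding v)\<^sup>*\<^sup>* w2 w1" using path by (rule sympD[OF symp_rtranclp[OF symp_adj_avoiding]])
  hence "(adj n ?E)\<^sup>*\<^sup>* w2 w1"
    by (rule mono_rtranclp[rule_format, rotated]) (auto simp: adj_avoiding_def remove_edge_def doubleton_eq_iff)
  moreover have "adj n ?E v w2" using v w by (auto simp: remove_edge_def doubleton_eq_iff)
  ultimately have "connected_graph n ?E"
    by (intro connected_remove_edge[OF connected]) (rule converse_rtranclp_into_rtranclp)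
  hence "n - 1 \<le> num_edges n ?E" using v by (intro graph.connected_num_edges_ge[OF graph_remove_edge]) auto
  moreover have "num_edges n ?E = n - 2"
    using num_edges_remove_edge[OF v w(1,3)] tree unfolding is_tree_def by simp
  moreover have "v \<noteq> w1" "v \<noteq> w2" using v w no_loop by blast+
  ultimately show False using v w by linarith
qed

lemma branch_cover:
  assumes v: "v < n" and r: "r < n" "r \<noteq> v"
  shows "\<exists>w<n. E v w \<and> r \<in> branch v w"
proof -
  have "(adj n E)\<^sup>*\<^sup>* v r" using connected v r unfolding connected_graph_def by blast
  hence "r = v \<or> (\<exists>w<n. E v w \<and> r \<in> branch v w)"
  proof (induction rule: rtranclp_induct)
    case (step b c)
    show ?case
    proof (cases "c = v")
      case False
      have "b = v \<or> (\<exists>w<n. E v w \<and> b \<in> branch v w)" by (fact step.IH)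
      thus ?thesis
      proof
        assume "b = v" thus ?thesis using step.hyps(2) by auto
      next
        assume "\<exists>w<n. E v w \<and> b \<in> branch v w"
        then obtain w where w: "w < n" "E v w" "b \<in> branch v w" by blast
        have "w \<noteq> v" using no_loop v w by blast
        thus ?thesis using branch_closed[OF w(1) _ w(3)] step.hyps(2) False w by blast
      qed
    qed simp
  qed simp
  thus ?thesis using r by blast
qed

lemma branches_disjoint:
  assumes "v < n" "w1 < n" "w2 < n" "E v w1" "E v w2" "w1 \<noteq> w2"
  shows "branch v w1 \<inter> branch v w2 = {}"
proof (rule equals0I)
  fix k assume "k \<in> branch v w1 \<inter> branch v w2"
  hence "(adj_avoiding v)\<^sup>*\<^sup>* w1 k" "(adj_avoiding v)\<^sup>*\<^sup>* k w2"
    unfolding branch_def by (auto intro: sympD[OF symp_rtranclp[OF symp_adj_avoiding]])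
  thus False using no_path_avoiding_between_neighbours[OF assms] by (meson rtranclp_trans)
qed

lemma branch_neighbour:
  assumes "v < n" "w < n" "E v w" "k \<in> branch v w" "k < n" "E v k"
  shows "k = w"
proof (rule ccontr)
  assume "k \<noteq> w"
  hence "branch v w \<inter> branch v k = {}" using branches_disjoint[of v w k] assms by auto
  thus False using assms(4) by auto
qed

end

section \<open>Eigenvectors of the algebraic connectivity of a tree\<close>

definition restrict_to :: "nat set \<Rightarrow> (nat \<Rightarrow> real) \<Rightarrow> nat \<Rightarrow> real" where
  "restrict_to B x k = (if k \<in> B then x k else 0)"

context graph
begin

lemma degree_le_max_degree: "v < n \<Longrightarrow> degree n E v \<le> max_degree n E"
  unfolding max_degree_def by (rule Max_ge) auto

lemma in_eigenspace_neighbour_sum: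
  assumes "in_eigenspace \<mu> y" "v < n" "y v = 0"
  shows "(\<Sum>j<n. if E v j then y j else 0) = 0"
  using assms mat_app_laplacian_at_zero[of v y] unfolding in_eigenspace_def by simp

lemma neighbour_sum_single:
  assumes "w < n" "E v w" and others: "\<And>j. j < n \<Longrightarrow> E v j \<Longrightarrow> j \<noteq> w \<Longrightarrow> y j = 0"
  shows "(\<Sum>j<n. if E v j then y j else 0) = y w"
proof -
  have "(\<Sum>j<n. if E v j then y j else 0) = (\<Sum>j<n. if j = w then y w else 0)"
    using assms by (intro sum.cong refl) auto
  thus ?thesis using assms(1) by simp
qed

lemma sign_change_edge:
  assumes "connected_graph n E" "a < n" "r < n" "x a = 0" "x r \<noteq> 0"
  shows "\<exists>v w. v < n \<and> w < n \<and> E v w \<and> x v = 0 \<and> x w \<noteq> 0"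
proof -
  have "(adj n E)\<^sup>*\<^sup>* a r" using assms(1-3) unfolding connected_graph_def by blast
  thus ?thesis using assms(4,5)
  proof (induction rule: rtranclp_induct)
    case (step b c)
    thus ?case by (cases "x b = 0") auto
  qed simp
qed

end

context tree
begin

lemma mat_app_outside_branch:
  assumes w: "w < n" "w \<noteq> v"
    and supp: "\<And>k. k \<notin> branch v w \<Longrightarrow> p k = 0"
    and k: "k < n" "k \<notin> branch v w" "k \<noteq> v"
  shows "mat_app p k = 0"
proof -
  have "p j = 0" if "j < n" "E k j" for j
  proof (rule ccontr)
    assume "p j \<noteq> 0"
    hence "j \<in> branch v w" using supp by blast
    moreover have "E j k" using edge_sym that k(1) by blast
    ultimately have "k \<in> branch v w" using branch_closed[OF w] branch_subset[OF w] k(1,3) by blast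
    with k(2) show False by simp
  qed
  thus ?thesis unfolding mat_app_laplacian[OF k(1)] using supp[OF k(2)] by (intro sum.neutral) auto
qed

lemma mat_app_branch_root:
  assumes v: "v < n" and w: "w < n" "E v w"
    and supp: "\<And>k. k \<notin> branch v w \<Longrightarrow> p k = 0"
  shows "mat_app p v = - p w"
proof -
  have "w \<noteq> v" using no_loop v w by blast
  hence pv: "p v = 0" using supp branch_subset(2)[OF w(1)] by blast
  have "p j = 0" if "j < n" "E v j" "j \<noteq> w" for j
    using supp branch_neighbour[OF v w _ that(1,2)] that(3) by blast
  hence "(\<Sum>j<n. if E v j then p j else 0) = p w" by (rule neighbour_sum_single[OF w])
  thus ?thesis using mat_app_laplacian_at_zero[of v p, OF v pv] by simp
qed

lemma mat_app_restrict_branch: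
  assumes w: "w < n" "w \<noteq> v"
    and x: "in_eigenspace \<mu> x" "x v = 0" and k: "k \<in> branch v w"
  shows "mat_app (restrict_to (branch v w) x) k = \<mu> * x k"
proof -
  have kn: "k < n" "k \<noteq> v" using branch_subset[OF w k] by auto
  have "restrict_to (branch v w) x j = x j" if "j < n" "E k j" for j
    using branch_closed[OF w k that] x(2) unfolding restrict_to_def by (cases "j = v") auto
  hence "mat_app (restrict_to (branch v w) x) k = mat_app x k"
    unfolding mat_app_laplacian[OF kn(1)] using k by (intro sum.cong) (auto simp: restrict_to_def)
  thus ?thesis using x kn(1) unfolding in_eigenspace_def by simp
qed

lemma abs_restrict_branch_rayleigh:
  assumes w: "w < n" "w \<noteq> v" and x: "in_eigenspace \<mu> x" "x v = 0"
  defines "p \<equiv> \<lambda>k. \<bar>restrict_to (branch v w) x k\<bar>"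
  shows "dot p (mat_app p) \<le> \<mu> * dot p p"
proof -
  let ?u = "restrict_to (branch v w) x"
  have "?u k * mat_app ?u k = \<mu> * (?u k * ?u k)" for k
    using mat_app_restrict_branch[OF w x, of k] by (simp add: restrict_to_def)
  hence "dot ?u (mat_app ?u) = \<mu> * dot ?u ?u"
    unfolding dot_def sum_distrib_left by (rule sum.cong[OF refl])
  moreover have "dot p p = dot ?u ?u" unfolding p_def dot_def by (simp add: abs_mult[symmetric])
  ultimately show ?thesis using laplacian_quadratic_form_abs[of ?u] unfolding p_def by simp
qed

lemma supported_on_branches_orthogonal:
  assumes v: "v < n" and w: "w < n" "E v w" and w': "w' < n" "E v w'" "w \<noteq> w'"
    and supp: "\<And>k. k \<notin> branch v w \<Longrightarrow> p k = 0"
    and supp': "\<And>k. k \<notin> branch v w' \<Longrightarrow> p' k = 0"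
  shows "dot p p' = 0" and "dot p (mat_app p') = 0"
proof -
  have "w' \<noteq> v" using no_loop v w' by blast
  have disjoint: "k \<notin> branch v w'" if "k \<in> branch v w" for k
    using branches_disjoint[OF v w(1) w'(1) w(2) w'(2,3)] that by blast
  have "p k * p' k = 0" for k using supp supp' disjoint by (cases "k \<in> branch v w") auto
  thus "dot p p' = 0" unfolding dot_def by simp
  have zero: "p k * mat_app p' k = 0" if "k < n" for k
  proof (cases "k \<in> branch v w")
    case True
    have "w \<noteq> v" using no_loop v w by blast
    hence "k \<noteq> v" using branch_subset(2)[OF w(1) _ True] by blast
    thus ?thesis using mat_app_outside_branch[OF w'(1) \<open>w' \<noteq> v\<close> supp' that disjoint[OF True]] by simp
  qed (simp add: supp)
  show "dot p (mat_app p') = 0" unfolding dot_def by (intro sum.neutral ballI) (simp add: zero)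
qed

lemma nonneg_eigen_on_branch_vanishes:
  assumes w: "w < n" "w \<noteq> v"
    and nonneg: "\<And>k. p k \<ge> 0" and "p w = 0"
    and eigen_on: "\<And>k. k \<in> branch v w \<Longrightarrow> mat_app p k = \<mu> * p k"
    and k: "k \<in> branch v w"
  shows "p k = 0"
proof -
  have "(adj_avoiding v)\<^sup>*\<^sup>* w k" using k unfolding branch_def by simp
  thus ?thesis
  proof (induction rule: rtranclp_induct)
    case (step b c)
    have "b \<in> branch v w" using step.hyps(1) unfolding branch_def by simp
    have bc: "b < n" "c < n" "E b c" using step.hyps(2) unfolding adj_avoiding_def by auto
    have "(\<Sum>j<n. if E b j then p j else 0) = 0"
      using eigen_on[OF \<open>b \<in> branch v w\<close>] mat_app_laplacian_at_zero[of b p, OF bc(1) step.IH] step.IH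
      by simp
    hence "\<forall>j\<in>{..<n}. (if E b j then p j else 0) = 0"
      by (subst (asm) sum_nonneg_eq_0_iff) (auto simp: nonneg)
    thus ?case using bc by force
  qed (fact \<open>p w = 0\<close>)
qed

text \<open>Comparing \<open>y\<close> with the restriction of \<open>x\<close> to the branch at \<open>w\<close>, symmetry of the
  Laplacian leaves only the term \<open>y v * x w\<close>.\<close>
lemma eigenspace_vanishes_at:
  assumes v: "v < n" and w: "w < n" "E v w"
    and x: "in_eigenspace \<mu> x" "x v = 0" "x w \<noteq> 0" and y: "in_eigenspace \<mu> y"
  shows "y v = 0"
proof -
  let ?u = "restrict_to (branch v w) x"
  have "w \<noteq> v" using no_loop v w by blast
  have supp: "\<And>k. k \<notin> branch v w \<Longrightarrow> ?u k = 0" by (simp add: restrict_to_def)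
  have "y k * mat_app ?u k = \<mu> * (?u k * y k) + (if k = v then - (y v * x w) else 0)"
    if "k < n" for k
  proof (cases "k \<in> branch v w")
    case True
    thus ?thesis using mat_app_restrict_branch[OF w(1) \<open>w \<noteq> v\<close> x(1,2) True]
        branch_subset(2)[OF w(1) \<open>w \<noteq> v\<close> True] by (simp add: restrict_to_def)
  next
    case False
    thus ?thesis
      using mat_app_outside_branch[where p = "?u", OF w(1) \<open>w \<noteq> v\<close> supp that False]
        mat_app_branch_root[where p = "?u", OF v w supp]
      by (cases "k = v") (auto simp: restrict_to_def)
  qed
  hence "dot y (mat_app ?u) = \<mu> * dot ?u y - y v * x w"
    unfolding dot_def using v by (simp add: sum.distrib sum_distrib_left)
  moreover have "dot y (mat_app ?u) = \<mu> * dot ?u y"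
    using dot_mat_app_commute[of y ?u] dot_mat_app_eigen[OF y, of ?u] by simp
  ultimately show ?thesis using x(3) by simp
qed

end

locale tree_eigenbasis = tree n E + laplacian_eigenbasis n E d q
  for n E d q
begin

text \<open>With \<open>a\<close> and \<open>b\<close> the sums of \<open>p'\<close> and \<open>p\<close>, the vector \<open>a p - b p'\<close> has zero sum and
  Rayleigh quotient at most \<open>mu2\<close>, so it is an eigenvector; on the branch at \<open>w\<close> it equals
  \<open>a p\<close>.\<close>
lemma eigen_on_branch_if_rayleigh_le:
  assumes v: "v < n" and w: "w < n" "E v w" and w': "w' < n" "E v w'" "w \<noteq> w'"
    and p: "\<And>k. k \<notin> branch v w \<Longrightarrow> p k = 0" "dot p (mat_app p) \<le> mu2 * dot p p"
    and p': "\<And>k. p' k \<ge> 0" "\<And>k. k \<notin> branch v w' \<Longrightarrow> p' k = 0"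
      "dot p' (mat_app p') \<le> mu2 * dot p' p'" "p' w' > 0"
    and k: "k \<in> branch v w"
  shows "mat_app p k = mu2 * p k"
proof -
  define a where "a = (\<Sum>k<n. p' k)"
  define b where "b = (\<Sum>k<n. p k)"
  define y where "y k = a * p k - b * p' k" for k
  have "a > 0" unfolding a_def using p'(1,4) w'(1) by (intro sum_pos2[of _ w']) auto
  have orth: "dot p p' = 0" and cross: "dot p (mat_app p') = 0"
    using supported_on_branches_orthogonal[where p = p and p' = p', OF v w w' p(1) p'(2)] by blast+
  have "dot y (mat_app y) = a\<^sup>2 * dot p (mat_app p) + b\<^sup>2 * dot p' (mat_app p')"
    unfolding y_def by (rule dot_mat_app_diff_orthogonal[OF cross])
  also have "\<dots> \<le> a\<^sup>2 * (mu2 * dot p p) + b\<^sup>2 * (mu2 * dot p' p')"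
    using p(2) p'(3) by (intro add_mono mult_left_mono) simp_all
  also have "\<dots> = mu2 * dot y y"
    unfolding y_def dot_diff_orthogonal[OF orth] by (simp add: algebra_simps)
  finally have "dot y (mat_app y) \<le> mu2 * dot y y" .
  moreover have "(\<Sum>k<n. y k) = 0"
    unfolding y_def by (simp add: sum_subtractf sum_distrib_left[symmetric] a_def b_def)
  ultimately have y: "in_eigenspace mu2 y"
    by (rule in_eigenspace_mu2_if_rayleigh_le[OF connected, rotated])
  have "w \<noteq> v" "w' \<noteq> v" using no_loop v w w' by blast+
  hence kn: "k < n" "k \<noteq> v" using branch_subset[OF w(1) _ k] by auto
  have "k \<notin> branch v w'" using branches_disjoint[OF v w(1) w'(1) w(2) w'(2,3)] k by blast
  hence "mat_app p' k = 0" "p' k = 0"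
    using mat_app_outside_branch[where p = p', OF w'(1) \<open>w' \<noteq> v\<close> p'(2) kn(1) _ kn(2)] p'(2)
    by simp_all
  hence "mat_app y k = a * mat_app p k" and "y k = a * p k"
    unfolding y_def mat_app_diff by simp_all
  moreover have "mat_app y k = mu2 * y k" using y kn(1) unfolding in_eigenspace_def by blast
  ultimately have "a * mat_app p k = a * (mu2 * p k)" by (metis mult.left_commute)
  thus ?thesis using \<open>a > 0\<close> by simp
qed

lemma mu2_eigvec_determined_by_neighbours:
  assumes v: "v < n" and w1: "w1 < n" "E v w1"
    and vanish: "\<forall>y. in_eigenspace mu2 y \<longrightarrow> y v = 0"
    and x1: "in_eigenspace mu2 x1" "x1 w1 \<noteq> 0"
    and x: "in_eigenspace mu2 x" and x_nbrs: "\<And>j. j < n \<Longrightarrow> E v j \<Longrightarrow> j \<noteq> w1 \<Longrightarrow> x j = 0"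
  shows "\<forall>k<n. x k = 0"
proof (rule ccontr)
  assume "\<not> ?thesis"
  then obtain r where r: "r < n" "x r \<noteq> 0" by blast
  have "x v = 0" "x1 v = 0" using vanish x x1(1) by blast+
  have "x w1 = 0"
    using in_eigenspace_neighbour_sum[OF x v \<open>x v = 0\<close>] neighbour_sum_single[OF w1 x_nbrs] by simp
  have "\<exists>w2. w2 < n \<and> E v w2 \<and> w2 \<noteq> w1 \<and> x1 w2 \<noteq> 0"
  proof (rule ccontr)
    assume "\<not> ?thesis"
    hence "(\<Sum>j<n. if E v j then x1 j else 0) = x1 w1" by (intro neighbour_sum_single[OF w1]) blast
    thus False using in_eigenspace_neighbour_sum[OF x1(1) v \<open>x1 v = 0\<close>] x1(2) by simp
  qed
  then obtain w2 where w2: "w2 < n" "E v w2" "w2 \<noteq> w1" "x1 w2 \<noteq> 0" by blast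
  have "r \<noteq> v" using r(2) \<open>x v = 0\<close> by blast
  then obtain w where w: "w < n" "E v w" "r \<in> branch v w" using branch_cover[OF v r(1)] by blast
  define w' where "w' = (if w = w1 then w2 else w1)"
  have w': "w' < n" "E v w'" "w \<noteq> w'" "x1 w' \<noteq> 0" unfolding w'_def using w1 w2 x1(2) by auto
  have "w \<noteq> v" "w' \<noteq> v" using no_loop v w w' by blast+
  define p where "p = (\<lambda>k. \<bar>restrict_to (branch v w) x k\<bar>)"
  define p' where "p' = (\<lambda>k. \<bar>restrict_to (branch v w') x1 k\<bar>)"
  have "mat_app p k = mu2 * p k" if "k \<in> branch v w" for k
  proof (rule eigen_on_branch_if_rayleigh_le[OF v w(1,2) w'(1-3) _ _ _ _ _ _ that])
    show "dot p (mat_app p) \<le> mu2 * dot p p"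
      unfolding p_def by (rule abs_restrict_branch_rayleigh[OF w(1) \<open>w \<noteq> v\<close> x \<open>x v = 0\<close>])
    show "dot p' (mat_app p') \<le> mu2 * dot p' p'"
      unfolding p'_def by (rule abs_restrict_branch_rayleigh[OF w'(1) \<open>w' \<noteq> v\<close> x1(1) \<open>x1 v = 0\<close>])
    show "p' w' > 0" using w'(4) by (simp add: p'_def restrict_to_def)
  qed (simp_all add: p_def p'_def restrict_to_def)
  moreover have "p w = 0" using \<open>x w1 = 0\<close> x_nbrs[OF w(1,2)] by (cases "w = w1") (auto simp: p_def restrict_to_def)
  ultimately have "p r = 0"
    using nonneg_eigen_on_branch_vanishes[OF w(1) \<open>w \<noteq> v\<close>, of p mu2] w(3) by (simp add: p_def)
  thus False using r(2) w(3) by (simp add: p_def restrict_to_def)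
qed

lemma eig_mult_mu2_le: "eig_mult (laplacian n E) mu2 \<le> max 1 (max_degree n E - 1)"
proof (cases "\<exists>v w1 x1. v < n \<and> w1 < n \<and> E v w1 \<and> (\<forall>y. in_eigenspace mu2 y \<longrightarrow> y v = 0)
    \<and> in_eigenspace mu2 x1 \<and> x1 w1 \<noteq> 0")
  case True
  then obtain v w1 x1 where v: "v < n" and w1: "w1 < n" "E v w1"
    and vanish: "\<forall>y. in_eigenspace mu2 y \<longrightarrow> y v = 0"
    and x1: "in_eigenspace mu2 x1" "x1 w1 \<noteq> 0" by blast
  have "eig_mult (laplacian n E) mu2 \<le> card ({j. j < n \<and> E v j} - {w1})"
  proof (rule eig_mult_le_card)
    fix x assume "in_eigenspace mu2 x" "\<forall>s\<in>{j. j < n \<and> E v j} - {w1}. x s = 0"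
    thus "\<forall>k<n. x k = 0"
      by (intro mu2_eigvec_determined_by_neighbours[OF v w1 vanish x1]) auto
  qed simp
  also have "\<dots> = degree n E v - 1" unfolding degree_def using w1 by simp
  also have "\<dots> \<le> max_degree n E - 1" using degree_le_max_degree[OF v] by simp
  finally show ?thesis by simp
next
  case False
  have "eig_mult (laplacian n E) mu2 \<le> card {0::nat}"
  proof (rule eig_mult_le_card)
    fix x assume x: "in_eigenspace mu2 x" "\<forall>s\<in>{0}. x s = 0"
    show "\<forall>k<n. x k = 0"
    proof (rule ccontr)
      assume "\<not> ?thesis"
      then obtain r where "r < n" "x r \<noteq> 0" by blast
      then obtain v w where vw: "v < n" "w < n" "E v w" "x v = 0" "x w \<noteq> 0"
        using sign_change_edge[OF connected, of 0 r x] x(2) by auto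
      hence "\<forall>y. in_eigenspace mu2 y \<longrightarrow> y v = 0"
        using eigenspace_vanishes_at[OF vw(1-3) x(1) vw(4,5)] by blast
      thus False using False vw x(1) by blast
    qed
  qed simp
  thus ?thesis by simp
qed

end

theorem proposition2p8:
  fixes n :: nat and E :: "nat \<Rightarrow> nat \<Rightarrow> bool"
  assumes "is_tree n E"
    and "max_degree n E \<ge> 2"
  shows "eig_mult (laplacian n E) (kth_eigenvalue (laplacian n E) 2) \<le> max_degree n E - 1"
proof -
  interpret tree n E
    by unfold_locales (use assms(1) in \<open>auto simp: is_tree_def\<close>)
  obtain d q where "sym_eigenbasis n (laplacian n E) d q" using eigenbasis_exists by blast
  then interpret tree_eigenbasis n E d q by intro_locales (simp add: sym_eigenbasis_def)
  show ?thesis using eig_mult_mu2_le assms(2) by simp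
qed

end
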